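(* Let $x$ be a point of a topological space $X$. Then: (i) $X$ has a countable $cn$-network at $x$ if and only if there exist $\mathbf{M}_x\subseteq\mathbb{N}^\mathbb{N}$ and an $\mathbf{M}_x$-decreasing base $\mathcal{U}(x)=\{U_\alpha:\alpha\in\mathbf{M}_x\}$ of neighborhoods at $x$ satisfying the condition $(\mathbf{D})$; in that case the family $\mathcal{D}_{\mathcal{U}(x)}$ is a countable $cn$-network at $x$. (ii) $X$ has a countable $ck$-network at $x$ if and only if there exist $\mathbf{M}_x\subseteq\mathbb{N}^\mathbb{N}$ and an $\mathbf{M}_x$-decreasing base $\mathcal{U}(x)=\{U_\alpha:\alpha\in\mathbf{M}_x\}$ at $x$ satisfying $(\mathbf{D})$ such that $\mathcal{D}_{\mathcal{U}(x)}$ is a countable $ck$-network at $x$. (iii) $X$ has a countable $cp$-network at $x$ if and only if there exist $\mathbf{M}_x\subseteq\mathbb{N}^\mathbb{N}$ and an $\mathbf{M}_x$-decreasing base $\mathcal{U}(x)=\{U_\alpha:\alpha\in\mathbf{M}_x\}$ at $x$ satisfying $(\mathbf{D})$ such that $\mathcal{D}_{\mathcal{U}(x)}$ is a countable $cp$-network at $x$.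
   Context: $\mathbb{N}^\mathbb{N}$ carries the partial order $\alpha\le\beta$ iff $\alpha_i\le\beta_i$ for all $i$. For a subset $I$ of a partially ordered set, a family $\{A_i\}_{i\in I}$ of sets is $I$-decreasing if $A_j\subseteq A_i$ whenever $i\le j$ in $I$. For $\alpha\in\mathbb{N}^\mathbb{N}$ and $k\in\mathbb{N}$ let $I_k(\alpha)=\{\beta\in\mathbb{N}^\mathbb{N}:\beta_i=\alpha_i \text{ for } i=1,\dots,k\}$. For $\mathbf{M}\subseteq\mathbb{N}^\mathbb{N}$ and an $\mathbf{M}$-decreasing family $\mathcal{U}=\{U_\alpha:\alpha\in\mathbf{M}\}$ of subsets of a set, define $D_k(\alpha)=\bigcap_{\beta\in I_k(\alpha)\cap\mathbf{M}}U_\beta$ and $\mathcal{D}_\mathcal{U}=\{D_k(\alpha):\alpha\in\mathbf{M},k\in\mathbb{N}\}$ (a countable family). $\mathcal{U}$ satisfies condition $(\mathbf{D})$ if $U_\alpha=\bigcup_{k\in\mathbb{N}}D_k(\alpha)$ for every $\alpha\in\mathbf{M}$. For $x\in X$, a family $\mathcal{N}$ of subsets of $X$ is: a $cn$-network at $x$ if for each neighborhood $O_x$ of $x$ the set $\bigcup\{N\in\mathcal{N}:x\in N\subseteq O_x\}$ is a neighborhood of $x$; a $ck$-network at $x$ if for every neighborhood $O_x$ there is a neighborhood $U_x$ of $x$ such that for each compact $K\subseteq U_x$ there is a finite $\mathcal{F}\subseteq\mathcal{N}$ with $x\in\bigcap\mathcal{F}$ and $K\subseteq\bigcup\mathcal{F}\subseteq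 O_x$; a $cp$-network at $x$ if for every neighborhood $O_x$ there is $N\in\mathcal{N}$ with $x\in N\subseteq O_x$, and for every $A\subseteq X$ with $x\in\overline{A}\setminus A$ and every neighborhood $O_x$ there is $N\in\mathcal{N}$ with $x\in N\subseteq O_x$ and $N\cap A$ infinite. *)

theory Defs
  imports "HOL-Analysis.Analysis"
begin

definition nhd :: "'a::topological_space \<Rightarrow> 'a set \<Rightarrow> bool" where
  "nhd x N \<longleftrightarrow> (\<exists>V. open V \<and> x \<in> V \<and> V \<subseteq> N)"

text \<open>Elements of N^N are functions nat => nat; coordinate i (i = 1,2,...) of the paper is
  argument i-1 here. The order is the pointwise order on functions.\<close>
definition Ik :: "nat \<Rightarrow> (nat \<Rightarrow> nat) \<Rightarrow> (nat \<Rightarrow> nat) set" where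
  "Ik k \<alpha> = {\<beta>. \<forall>i<k. \<beta> i = \<alpha> i}"

definition decreasing_family :: "(nat \<Rightarrow> nat) set \<Rightarrow> ((nat \<Rightarrow> nat) \<Rightarrow> 'b set) \<Rightarrow> bool" where
  "decreasing_family M U \<longleftrightarrow> (\<forall>\<alpha>\<in>M. \<forall>\<beta>\<in>M. \<alpha> \<le> \<beta> \<longrightarrow> U \<beta> \<subseteq> U \<alpha>)"

definition nhd_base :: "'a::topological_space \<Rightarrow> (nat \<Rightarrow> nat) set \<Rightarrow> ((nat \<Rightarrow> nat) \<Rightarrow> 'a set) \<Rightarrow> bool" where
  "nhd_base x M U \<longleftrightarrow> (\<forall>\<alpha>\<in>M. nhd x (U \<alpha>)) \<and> (\<forall>W. nhd x W \<longrightarrow> (\<exists>\<alpha>\<in>M. U \<alpha> \<subseteq> W))"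

definition Dk :: "(nat \<Rightarrow> nat) set \<Rightarrow> ((nat \<Rightarrow> nat) \<Rightarrow> 'b set) \<Rightarrow> nat \<Rightarrow> (nat \<Rightarrow> nat) \<Rightarrow> 'b set" where
  "Dk M U k \<alpha> = (\<Inter>\<beta>\<in>Ik k \<alpha> \<inter> M. U \<beta>)"

definition DU :: "(nat \<Rightarrow> nat) set \<Rightarrow> ((nat \<Rightarrow> nat) \<Rightarrow> 'b set) \<Rightarrow> 'b set set" where
  "DU M U = {Dk M U k \<alpha> | k \<alpha>. \<alpha> \<in> M \<and> k \<ge> 1}"

definition condD :: "(nat \<Rightarrow> nat) set \<Rightarrow> ((nat \<Rightarrow> nat) \<Rightarrow> 'b set) \<Rightarrow> bool" where
  "condD M U \<longleftrightarrow> (\<forall>\<alpha>\<in>M. U \<alpha> = (\<Union>k\<in>{1..}. Dk M U k \<alpha>))"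

definition cn_network :: "'a::topological_space \<Rightarrow> 'a set set \<Rightarrow> bool" where
  "cn_network x \<N> \<longleftrightarrow>
     (\<forall>W. nhd x W \<longrightarrow> nhd x (\<Union>{N \<in> \<N>. x \<in> N \<and> N \<subseteq> W}))"

definition ck_network :: "'a::topological_space \<Rightarrow> 'a set set \<Rightarrow> bool" where
  "ck_network x \<N> \<longleftrightarrow>
     (\<forall>W. nhd x W \<longrightarrow> (\<exists>V. nhd x V \<and>
        (\<forall>K. compact K \<and> K \<subseteq> V \<longrightarrow>
           (\<exists>\<F>. finite \<F> \<and> \<F> \<subseteq> \<N> \<and> x \<in> \<Inter>\<F> \<and> K \<subseteq> \<Union>\<F> \<and> \<Union>\<F> \<subseteq> W))))"

definition cp_network :: "'a::topological_space \<Rightarrow> 'a set set \<Rightarrow> bool" where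
  "cp_network x \<N> \<longleftrightarrow>
     (\<forall>W. nhd x W \<longrightarrow> (\<exists>N\<in>\<N>. x \<in> N \<and> N \<subseteq> W)) \<and>
     (\<forall>A W. x \<in> closure A - A \<and> nhd x W \<longrightarrow>
        (\<exists>N\<in>\<N>. x \<in> N \<and> N \<subseteq> W \<and> infinite (N \<inter> A)))"

definition good_base :: "'a::topological_space \<Rightarrow> (nat \<Rightarrow> nat) set \<Rightarrow> ((nat \<Rightarrow> nat) \<Rightarrow> 'a set) \<Rightarrow> bool" where
  "good_base x M U \<longleftrightarrow> decreasing_family M U \<and> nhd_base x M U \<and> condD M U"

end

theory Submission
  imports Defs
begin

text \<open>Enumerate the countably many members \<open>f 0, f 1, \<dots>\<close> of a countable \<open>cn\<close>-network that
  contain \<open>x\<close>, and code a neighbourhood \<open>W\<close> by the sequence \<open>\<alpha>\<close> with \<open>\<alpha> n = 0\<close> iff \<open>f n \<subseteq> W\<close>;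
  put \<open>U \<alpha> = \<Union>{f n | \<alpha> n = 0}\<close>. Then \<open>U\<close> is decreasing, and since every \<open>\<beta>\<close> agreeing with
  \<open>\<alpha>\<close> up to \<open>n\<close> also vanishes at \<open>n\<close>, \<open>f n \<subseteq> D\<^sub>n\<^sub>+\<^sub>1(\<alpha>)\<close> whenever \<open>\<alpha> n = 0\<close>. This gives
  condition (D), and it shows that every network member is enlarged by a member of
  \<open>\<D>\<^sub>\<U>\<close> inside the same neighbourhood. Enlarging members preserves the \<open>ck\<close>- and
  \<open>cp\<close>-network properties, and both imply the \<open>cn\<close>-property, which gives (ii) and (iii).\<close>

lemma nhd_mem: "nhd x S \<Longrightarrow> x \<in> S"
  by (auto simp: nhd_def)

lemma nhd_mono: "nhd x S \<Longrightarrow> S \<subseteq> T \<Longrightarrow> nhd x T"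
  by (auto simp: nhd_def)

lemma nhd_UNIV: "nhd x UNIV"
  by (auto simp: nhd_def)

lemma nhd_iff_mem_interior: "nhd x V \<longleftrightarrow> x \<in> interior V"
  by (auto simp: nhd_def interior_def)

lemma Dk_subset: "\<alpha> \<in> M \<Longrightarrow> Dk M U k \<alpha> \<subseteq> U \<alpha>"
  by (auto simp: Dk_def Ik_def)

lemma mem_Dk_if_nhd_base: "nhd_base x M U \<Longrightarrow> x \<in> Dk M U k \<alpha>"
  by (auto simp: Dk_def nhd_base_def dest: nhd_mem)

lemma Dk_eq_Dk_prefix: "Dk M U k \<alpha> = Dk M U k (\<lambda>i. if i < k then map \<alpha> [0..<k] ! i else 0)"
proof -
  have "Ik k \<alpha> = Ik k (\<lambda>i. if i < k then map \<alpha> [0..<k] ! i else 0)"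
    by (auto simp: Ik_def)
  then show ?thesis by (simp add: Dk_def)
qed

lemma countable_DU: "countable (DU M U)"
proof -
  let ?D = "\<lambda>(k, l). Dk M U k (\<lambda>i. if i < k then l ! i else 0)"
  have "DU M U \<subseteq> ?D ` (UNIV :: (nat \<times> nat list) set)"
  proof
    fix D assume "D \<in> DU M U"
    then obtain k \<alpha> where D: "D = Dk M U k \<alpha>" by (auto simp: DU_def)
    show "D \<in> ?D ` UNIV"
      by (rule image_eqI[where x="(k, map \<alpha> [0..<k])"]) (simp_all add: D Dk_eq_Dk_prefix[of M U k \<alpha>])
  qed
  then show ?thesis by (rule countable_subset) simp
qed

lemma cn_network_DU:
  assumes "good_base x M U"
  shows "cn_network x (DU M U)"
  unfolding cn_network_def
proof (intro allI impI)
  fix W assume "nhd x W"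
  from assms have base: "nhd_base x M U" and D: "condD M U"
    by (auto simp: good_base_def)
  with \<open>nhd x W\<close> obtain \<alpha> where \<alpha>: "\<alpha> \<in> M" "U \<alpha> \<subseteq> W" by (auto simp: nhd_base_def)
  have "U \<alpha> \<subseteq> \<Union>{N \<in> DU M U. x \<in> N \<and> N \<subseteq> W}"
  proof
    fix y assume "y \<in> U \<alpha>"
    with D \<alpha> obtain k where k: "k \<ge> 1" "y \<in> Dk M U k \<alpha>" by (auto simp: condD_def)
    moreover have "Dk M U k \<alpha> \<in> DU M U" using \<alpha> k by (auto simp: DU_def)
    moreover have "x \<in> Dk M U k \<alpha>" using base by (rule mem_Dk_if_nhd_base)
    moreover have "Dk M U k \<alpha> \<subseteq> W" using Dk_subset[OF \<alpha>(1)] \<alpha>(2) by (rule order_trans)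
    ultimately show "y \<in> \<Union>{N \<in> DU M U. x \<in> N \<and> N \<subseteq> W}" by blast
  qed
  moreover have "nhd x (U \<alpha>)" using base \<alpha> by (auto simp: nhd_base_def)
  ultimately show "nhd x (\<Union>{N \<in> DU M U. x \<in> N \<and> N \<subseteq> W})" by (rule nhd_mono[rotated])
qed

definition union_at_zeros :: "(nat \<Rightarrow> 'b set) \<Rightarrow> (nat \<Rightarrow> nat) \<Rightarrow> 'b set" where
  "union_at_zeros f \<alpha> = \<Union>{f n | n. \<alpha> n = 0}"

lemma decreasing_family_union_at_zeros: "decreasing_family M (union_at_zeros f)"
  unfolding decreasing_family_def
proof (intro ballI impI)
  fix \<alpha> \<beta> :: "nat \<Rightarrow> nat" assume "\<alpha> \<le> \<beta>"
  then have "\<beta> n = 0 \<Longrightarrow> \<alpha> n = 0" for n by (metis le_funD le_zero_eq)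
  then show "union_at_zeros f \<beta> \<subseteq> union_at_zeros f \<alpha>" unfolding union_at_zeros_def by blast
qed

lemma subset_Dk_union_at_zeros:
  assumes "\<alpha> n = 0"
  shows "f n \<subseteq> Dk M (union_at_zeros f) (Suc n) \<alpha>"
proof -
  have "\<beta> n = 0" if "\<beta> \<in> Ik (Suc n) \<alpha>" for \<beta>
    using that assms by (auto simp: Ik_def)
  then show ?thesis by (auto simp: Dk_def union_at_zeros_def)
qed

lemma condD_union_at_zeros: "condD M (union_at_zeros f)"
  unfolding condD_def
proof (intro ballI equalityI subsetI)
  fix \<alpha> y assume "y \<in> union_at_zeros f \<alpha>"
  then obtain n where "\<alpha> n = 0" "y \<in> f n" by (auto simp: union_at_zeros_def)
  then have "y \<in> Dk M (union_at_zeros f) (Suc n) \<alpha>"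
    using subset_Dk_union_at_zeros[of \<alpha> n f M] by blast
  then show "y \<in> (\<Union>k\<in>{1..}. Dk M (union_at_zeros f) k \<alpha>)" by (rule UN_I[rotated]) simp
next
  fix \<alpha> y assume "\<alpha> \<in> M" "y \<in> (\<Union>k\<in>{1..}. Dk M (union_at_zeros f) k \<alpha>)"
  then obtain k where "y \<in> Dk M (union_at_zeros f) k \<alpha>" by blast
  with Dk_subset[of \<alpha> M "union_at_zeros f" k] \<open>\<alpha> \<in> M\<close> show "y \<in> union_at_zeros f \<alpha>" by blast
qed

lemma union_at_zeros_code:
  "union_at_zeros f (\<lambda>n. if f n \<subseteq> W then 0 else 1) = \<Union>{N \<in> range f. N \<subseteq> W}"
  unfolding union_at_zeros_def by (auto split: if_splits)

definition enlarges_at :: "'a::topological_space \<Rightarrow> 'a set set \<Rightarrow> 'a set set \<Rightarrow> bool" where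
  "enlarges_at x \<N> \<D> \<longleftrightarrow>
     (\<forall>W N. nhd x W \<and> N \<in> \<N> \<and> x \<in> N \<and> N \<subseteq> W \<longrightarrow> (\<exists>D\<in>\<D>. x \<in> D \<and> N \<subseteq> D \<and> D \<subseteq> W))"

lemma enlarges_atE:
  assumes "enlarges_at x \<N> \<D>" "nhd x W" "N \<in> \<N>" "x \<in> N" "N \<subseteq> W"
  obtains D where "D \<in> \<D>" "x \<in> D" "N \<subseteq> D" "D \<subseteq> W"
  using assms unfolding enlarges_at_def by blast

lemma cn_network_enumeration:
  fixes x :: "'a::topological_space"
  assumes "countable \<N>" and cn: "cn_network x \<N>"
  obtains f :: "nat \<Rightarrow> 'a set" where "range f = {N \<in> \<N>. x \<in> N}"
proof -
  have "x \<in> \<Union>{N \<in> \<N>. x \<in> N \<and> N \<subseteq> UNIV}"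
    using cn nhd_UNIV[of x] unfolding cn_network_def by (blast dest: nhd_mem)
  then have "{N \<in> \<N>. x \<in> N} \<noteq> {}" by blast
  moreover have "countable {N \<in> \<N>. x \<in> N}" using \<open>countable \<N>\<close> by simp
  ultimately have "range (from_nat_into {N \<in> \<N>. x \<in> N}) = {N \<in> \<N>. x \<in> N}"
    by (rule range_from_nat_into)
  then show thesis by (rule that)
qed

lemma good_base_enlarging_cn_network:
  assumes "countable \<N>" and cn: "cn_network x \<N>"
  shows "\<exists>M U. good_base x M U \<and> enlarges_at x \<N> (DU M U)"
proof -
  obtain f :: "nat \<Rightarrow> 'a set" where range_f: "range f = {N \<in> \<N>. x \<in> N}"
    using cn_network_enumeration[OF assms] .
  define U where "U = union_at_zeros f"
  define code :: "'a set \<Rightarrow> nat \<Rightarrow> nat" where "code W = (\<lambda>n. if f n \<subseteq> W then 0 else 1)" for W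
  define M where "M = code ` {W. nhd x W}"
  have U_code: "U (code W) = \<Union>{N \<in> \<N>. x \<in> N \<and> N \<subseteq> W}" for W
    unfolding U_def code_def union_at_zeros_code range_f by blast
  have nhd_base: "nhd_base x M U"
    unfolding nhd_base_def
  proof (intro conjI ballI allI impI)
    fix \<alpha> assume "\<alpha> \<in> M" then show "nhd x (U \<alpha>)"
      using cn U_code unfolding M_def cn_network_def by auto
  next
    fix W assume "nhd x W"
    then have "code W \<in> M" "U (code W) \<subseteq> W" unfolding M_def by (auto simp: U_code)
    then show "\<exists>\<alpha>\<in>M. U \<alpha> \<subseteq> W" by blast
  qed
  have enlarges: "enlarges_at x \<N> (DU M U)"
    unfolding enlarges_at_def
  proof (intro allI impI, elim conjE)
    fix W N assume W: "nhd x W" and N: "N \<in> \<N>" "x \<in> N" "N \<subseteq> W"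
    have "N \<in> range f" using N range_f by simp
    then obtain n where fn: "f n = N" by blast
    have "code W \<in> M" using W unfolding M_def by blast
    then have "Dk M U (Suc n) (code W) \<in> DU M U"
      unfolding DU_def by (intro CollectI exI[of _ "Suc n"] exI[of _ "code W"]) simp
    moreover have "x \<in> Dk M U (Suc n) (code W)"
      using nhd_base by (rule mem_Dk_if_nhd_base)
    moreover have "code W n = 0" using fn N(3) by (simp add: code_def)
    then have "N \<subseteq> Dk M U (Suc n) (code W)"
      unfolding U_def fn[symmetric] by (rule subset_Dk_union_at_zeros)
    moreover have "U (code W) \<subseteq> W" by (auto simp: U_code)
    then have "Dk M U (Suc n) (code W) \<subseteq> W"
      by (rule order_trans[OF Dk_subset[OF \<open>code W \<in> M\<close>]])
    ultimately show "\<exists>D\<in>DU M U. x \<in> D \<and> N \<subseteq> D \<and> D \<subseteq> W" by blast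
  qed
  have "good_base x M U"
    unfolding good_base_def using nhd_base decreasing_family_union_at_zeros condD_union_at_zeros
    unfolding U_def by (intro conjI)
  with enlarges show ?thesis by (intro exI[of _ M] exI[of _ U] conjI)
qed

lemma ck_network_enlarges:
  assumes ck: "ck_network x \<N>" and enl: "enlarges_at x \<N> \<D>"
  shows "ck_network x \<D>"
  unfolding ck_network_def
proof (intro allI impI)
  fix W assume W: "nhd x W"
  then obtain V where V: "nhd x V" and cover: "\<And>K. compact K \<and> K \<subseteq> V \<Longrightarrow>
      \<exists>\<F>. finite \<F> \<and> \<F> \<subseteq> \<N> \<and> x \<in> \<Inter>\<F> \<and> K \<subseteq> \<Union>\<F> \<and> \<Union>\<F> \<subseteq> W"
    using ck unfolding ck_network_def by blast
  show "\<exists>V. nhd x V \<and> (\<forall>K. compact K \<and> K \<subseteq> V \<longrightarrow>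
      (\<exists>\<F>. finite \<F> \<and> \<F> \<subseteq> \<D> \<and> x \<in> \<Inter>\<F> \<and> K \<subseteq> \<Union>\<F> \<and> \<Union>\<F> \<subseteq> W))"
  proof (intro exI[of _ V] conjI allI impI)
    fix K assume "compact K \<and> K \<subseteq> V"
    from cover[OF this] obtain \<F>
      where \<F>: "finite \<F>" "\<F> \<subseteq> \<N>" "x \<in> \<Inter>\<F>" "K \<subseteq> \<Union>\<F>" "\<Union>\<F> \<subseteq> W"
      by blast
    have "\<forall>N\<in>\<F>. \<exists>D. D \<in> \<D> \<and> x \<in> D \<and> N \<subseteq> D \<and> D \<subseteq> W"
    proof
      fix N assume "N \<in> \<F>"
      then have "N \<in> \<N>" "x \<in> N" "N \<subseteq> W" using \<F> by auto
      with enl W show "\<exists>D. D \<in> \<D> \<and> x \<in> D \<and> N \<subseteq> D \<and> D \<subseteq> W" by (meson enlarges_atE)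
    qed
    from bchoice[OF this] obtain g where g: "\<forall>N\<in>\<F>. g N \<in> \<D> \<and> x \<in> g N \<and> N \<subseteq> g N \<and> g N \<subseteq> W"
      by blast
    show "\<exists>\<F>'. finite \<F>' \<and> \<F>' \<subseteq> \<D> \<and> x \<in> \<Inter>\<F>' \<and> K \<subseteq> \<Union>\<F>' \<and> \<Union>\<F>' \<subseteq> W"
    proof (intro exI[of _ "g ` \<F>"] conjI)
      show "finite (g ` \<F>)" using \<F>(1) by simp
      show "g ` \<F> \<subseteq> \<D>" "x \<in> \<Inter>(g ` \<F>)" "\<Union>(g ` \<F>) \<subseteq> W" using g by auto
      show "K \<subseteq> \<Union>(g ` \<F>)" using \<F>(4) g by blast
    qed
  qed (rule V)
qed

lemma cp_network_enlarges:
  assumes cp: "cp_network x \<N>" and enl: "enlarges_at x \<N> \<D>"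
  shows "cp_network x \<D>"
  unfolding cp_network_def
proof (intro conjI allI impI)
  fix W assume W: "nhd x W"
  then obtain N where "N \<in> \<N>" "x \<in> N" "N \<subseteq> W" using cp unfolding cp_network_def by blast
  with enl W show "\<exists>D\<in>\<D>. x \<in> D \<and> D \<subseteq> W" by (meson enlarges_atE)
next
  fix A W assume AW: "x \<in> closure A - A \<and> nhd x W"
  then obtain N where N: "N \<in> \<N>" "x \<in> N" "N \<subseteq> W" "infinite (N \<inter> A)"
    using cp unfolding cp_network_def by blast
  with enl AW obtain D where "D \<in> \<D>" "x \<in> D" "N \<subseteq> D" "D \<subseteq> W"
    by (meson enlarges_atE)
  moreover from \<open>N \<subseteq> D\<close> N(4) have "infinite (D \<inter> A)"
    by (meson Int_mono finite_subset order_refl)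
  ultimately show "\<exists>D\<in>\<D>. x \<in> D \<and> D \<subseteq> W \<and> infinite (D \<inter> A)" by blast
qed

lemma ck_network_imp_cn_network: "ck_network x \<N> \<Longrightarrow> cn_network x \<N>"
  unfolding cn_network_def
proof (intro allI impI)
  fix W assume "ck_network x \<N>" "nhd x W"
  then obtain V where V: "nhd x V" and cover: "\<And>K. compact K \<and> K \<subseteq> V \<Longrightarrow>
      \<exists>\<F>. finite \<F> \<and> \<F> \<subseteq> \<N> \<and> x \<in> \<Inter>\<F> \<and> K \<subseteq> \<Union>\<F> \<and> \<Union>\<F> \<subseteq> W"
    unfolding ck_network_def by blast
  have "V \<subseteq> \<Union>{N \<in> \<N>. x \<in> N \<and> N \<subseteq> W}"
  proof
    fix y assume "y \<in> V"
    then have "compact {y} \<and> {y} \<subseteq> V" by simp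
    from cover[OF this] obtain \<F> where "\<F> \<subseteq> \<N>" "x \<in> \<Inter>\<F>" "{y} \<subseteq> \<Union>\<F>" "\<Union>\<F> \<subseteq> W"
      by blast
    then show "y \<in> \<Union>{N \<in> \<N>. x \<in> N \<and> N \<subseteq> W}" by blast
  qed
  with V show "nhd x (\<Union>{N \<in> \<N>. x \<in> N \<and> N \<subseteq> W})" by (rule nhd_mono)
qed

text \<open>If the union \<open>V\<close> of the small members through \<open>x\<close> were no neighbourhood, \<open>x\<close> would lie
  in the closure of \<open>-V\<close>, and some small member through \<open>x\<close> would meet \<open>-V\<close>.\<close>
lemma cp_network_imp_cn_network: "cp_network x \<N> \<Longrightarrow> cn_network x \<N>"
  unfolding cn_network_def
proof (intro allI impI)
  fix W assume cp: "cp_network x \<N>" and W: "nhd x W"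
  define V where "V = \<Union>{N \<in> \<N>. x \<in> N \<and> N \<subseteq> W}"
  show "nhd x V"
  proof (rule ccontr)
    assume "\<not> nhd x V"
    moreover have "x \<in> V" using cp W unfolding cp_network_def V_def by blast
    ultimately have "x \<in> closure (- V) - (- V)"
      by (simp add: nhd_iff_mem_interior closure_complement)
    then obtain N where N: "N \<in> \<N>" "x \<in> N" "N \<subseteq> W" and "infinite (N \<inter> - V)"
      using cp W unfolding cp_network_def by blast
    moreover have "N \<inter> - V = {}" unfolding V_def using N by blast
    ultimately show False by simp
  qed
qed

lemma countable_network_iff_good_base:
  assumes imp_cn: "\<And>\<N>. P \<N> \<Longrightarrow> cn_network x \<N>"
    and enlarges: "\<And>\<N> \<D>. P \<N> \<Longrightarrow> enlarges_at x \<N> \<D> \<Longrightarrow> P \<D>"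
  shows "(\<exists>\<N>. countable \<N> \<and> P \<N>) \<longleftrightarrow> (\<exists>M U. good_base x M U \<and> countable (DU M U) \<and> P (DU M U))"
proof
  assume "\<exists>\<N>. countable \<N> \<and> P \<N>"
  then obtain \<N> where "countable \<N>" "P \<N>" by blast
  then obtain M U where "good_base x M U" "enlarges_at x \<N> (DU M U)"
    using good_base_enlarging_cn_network[OF _ imp_cn] by blast
  with \<open>P \<N>\<close> have "good_base x M U" "countable (DU M U)" "P (DU M U)"
    by (simp_all add: countable_DU enlarges)
  then show "\<exists>M U. good_base x M U \<and> countable (DU M U) \<and> P (DU M U)" by blast
next
  assume "\<exists>M U. good_base x M U \<and> countable (DU M U) \<and> P (DU M U)"
  then show "\<exists>\<N>. countable \<N> \<and> P \<N>" by blast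
qed

theorem mainTheorem3:
  fixes x :: "'a::topological_space"
  shows "((\<exists>\<N>. countable \<N> \<and> cn_network x \<N>) \<longleftrightarrow> (\<exists>M U. good_base x M U))
       \<and> (\<forall>M U. good_base x M U \<longrightarrow> countable (DU M U) \<and> cn_network x (DU M U))
       \<and> ((\<exists>\<N>. countable \<N> \<and> ck_network x \<N>) \<longleftrightarrow>
            (\<exists>M U. good_base x M U \<and> countable (DU M U) \<and> ck_network x (DU M U)))
       \<and> ((\<exists>\<N>. countable \<N> \<and> cp_network x \<N>) \<longleftrightarrow>
            (\<exists>M U. good_base x M U \<and> countable (DU M U) \<and> cp_network x (DU M U)))"
proof (intro conjI)
  show "(\<exists>\<N>. countable \<N> \<and> cn_network x \<N>) \<longleftrightarrow> (\<exists>M U. good_base x M U)"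
  proof
    assume "\<exists>\<N>. countable \<N> \<and> cn_network x \<N>"
    then obtain \<N> where "countable \<N>" "cn_network x \<N>" by blast
    from good_base_enlarging_cn_network[OF this] show "\<exists>M U. good_base x M U" by blast
  next
    assume "\<exists>M U. good_base x M U"
    then obtain M U where "good_base x M U" by blast
    with countable_DU[of M U] show "\<exists>\<N>. countable \<N> \<and> cn_network x \<N>"
      by (blast dest: cn_network_DU)
  qed
  show "\<forall>M U. good_base x M U \<longrightarrow> countable (DU M U) \<and> cn_network x (DU M U)"
    by (simp add: cn_network_DU countable_DU)
  show "(\<exists>\<N>. countable \<N> \<and> ck_network x \<N>) \<longleftrightarrow>
      (\<exists>M U. good_base x M U \<and> countable (DU M U) \<and> ck_network x (DU M U))"
    by (rule countable_network_iff_good_base[OF ck_network_imp_cn_network ck_network_enlarges])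
  show "(\<exists>\<N>. countable \<N> \<and> cp_network x \<N>) \<longleftrightarrow>
      (\<exists>M U. good_base x M U \<and> countable (DU M U) \<and> cp_network x (DU M U))"
    by (rule countable_network_iff_good_base[OF cp_network_imp_cn_network cp_network_enlarges])
qed

end
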